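(* Let $G$ be a finite simple unmixed graph with $r$ minimal vertex covers, and let $\mathcal{LS}(I_c(G))$ be the linear syzygy matrix of $I_c(G)$. Then the graph $\mathcal{G}_{I_c(G)}$ is connected if and only if ${\rm rank}(\mathcal{LS}(I_c(G)))=r-1$.
   Context: $G$ has vertex set $\{t_1,\ldots,t_s\}$, $S=K[t_1,\ldots,t_s]$, $K$ a field. $G$ is unmixed if all minimal vertex covers (inclusion-minimal sets of vertices meeting every edge) have the same size. Let $C_1,\ldots,C_r$ be the minimal vertex covers and $u_i=\prod_{t_j\in C_i}t_j$; $I_c(G)=(u_1,\ldots,u_r)$. The graph $\mathcal{G}_{I_c(G)}$ has vertex set $\{C_1,\ldots,C_r\}$, with $\{C_i,C_j\}$ ($i\ne j$) an edge iff $|C_i\cup C_j|=|C_i|+1$. The linear syzygy matrix $\mathcal{LS}(I_c(G))$ is the $r\times|E(\mathcal{G}_{I_c(G)})|$ matrix whose columns are the vectors $t_\ell e_i-t_ke_j\in S^r$ such that $t_\ell u_i=t_k u_j$, one for each edge $\{C_i,C_j\}$ (it is the zero matrix if there are no such syzygies). The rank is the determinantal rank: the largest $k$ such that some $k\times k$ minor is nonzero. *)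

theory Defs
  imports "HOL-Library.Poly_Mapping" "Jordan_Normal_Form.Determinant"
begin

text \<open>Simple graph on the vertex set {0..<s} (vertex j stands for t_(j+1)),
  edges are 2-element subsets.\<close>
definition simple_graph :: "nat \<Rightarrow> nat set set \<Rightarrow> bool" where
  "simple_graph s E \<longleftrightarrow> (\<forall>e\<in>E. e \<subseteq> {..<s} \<and> card e = 2)"

definition vertex_cover :: "nat \<Rightarrow> nat set set \<Rightarrow> nat set \<Rightarrow> bool" where
  "vertex_cover s E C \<longleftrightarrow> C \<subseteq> {..<s} \<and> (\<forall>e\<in>E. e \<inter> C \<noteq> {})"

definition minimal_vertex_cover :: "nat \<Rightarrow> nat set set \<Rightarrow> nat set \<Rightarrow> bool" where
  "minimal_vertex_cover s E C \<longleftrightarrow> vertex_cover s E C \<and>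
     (\<forall>D. D \<subset> C \<longrightarrow> \<not> vertex_cover s E D)"

definition unmixed :: "nat \<Rightarrow> nat set set \<Rightarrow> bool" where
  "unmixed s E \<longleftrightarrow> (\<forall>C D. minimal_vertex_cover s E C \<longrightarrow> minimal_vertex_cover s E D
      \<longrightarrow> card C = card D)"

text \<open>Polynomial ring S = K[t_1,...,t_s], as finitely supported functions from
  monomials (exponent vectors) to K; the variable with index j.\<close>
definition var :: "nat \<Rightarrow> ((nat \<Rightarrow>\<^sub>0 nat) \<Rightarrow>\<^sub>0 'k::field)" where
  "var j = Poly_Mapping.single (Poly_Mapping.single j 1) 1"

definition cov_adj :: "nat set list \<Rightarrow> nat \<Rightarrow> nat \<Rightarrow> bool" where
  "cov_adj Cs i j \<longleftrightarrow> i < length Cs \<and> j < length Cs \<and> i \<noteq> j \<and>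
     card (Cs!i \<union> Cs!j) = card (Cs!i) + 1"

definition cov_graph_connected :: "nat set list \<Rightarrow> bool" where
  "cov_graph_connected Cs \<longleftrightarrow>
     (\<forall>i<length Cs. \<forall>j<length Cs. (i, j) \<in> {(a, b). cov_adj Cs a b}\<^sup>*)"

definition LS_cols :: "nat set list \<Rightarrow> (nat \<times> nat) set" where
  "LS_cols Cs = {(i, j). i < j \<and> cov_adj Cs i j}"

text \<open>Entry in row a of the column for the edge (i,j): the column is
  t_l e_i - t_k e_j with t_l u_i = t_k u_j, i.e. l the element of C_j - C_i and
  k the element of C_i - C_j.\<close>
definition LS_entry :: "nat set list \<Rightarrow> nat \<Rightarrow> nat \<times> nat \<Rightarrow> ((nat \<Rightarrow>\<^sub>0 nat) \<Rightarrow>\<^sub>0 'k::field)" where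
  "LS_entry Cs a p = (case p of (i, j) \<Rightarrow>
     (let l = (THE x. x \<in> Cs!j - Cs!i); k = (THE x. x \<in> Cs!i - Cs!j) in
      if a = i then var l else if a = j then - var k else 0))"

definition LS_rank :: "'k::field itself \<Rightarrow> nat set list \<Rightarrow> nat" where
  "LS_rank _ Cs = Max {k. \<exists>is js. distinct is \<and> distinct js \<and> length is = k \<and> length js = k \<and>
      set is \<subseteq> {..<length Cs} \<and> set js \<subseteq> LS_cols Cs \<and>
      det (mat k k (\<lambda>(a, b). (LS_entry Cs (is!a) (js!b) :: (nat \<Rightarrow>\<^sub>0 nat) \<Rightarrow>\<^sub>0 'k))) \<noteq> 0}"

end

(* The cover monomials u_i of a union K of connected components of the graph of covers form a
   left null vector of LS(I_c(G)): a column t_l e_i - t_k e_j meets K in both of its rows or in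
   neither, and t_l u_i = t_k u_j. So every minor whose rows contain such a nonempty K vanishes.
   This kills all r x r minors, and, when the graph is disconnected, all (r-1) x (r-1) minors too,
   because r-1 rows contain one of two complementary unions of components. If the graph is
   connected, the rows other than C_1 ordered along a spanning tree, with the tree edges as
   columns, give an upper triangular (r-1) x (r-1) minor whose diagonal consists of variables.
   Only finiteness and equal size of the covers enter the argument. *)

theory Submission
  imports Defs
begin

type_synonym 'k mpoly = "(nat \<Rightarrow>\<^sub>0 nat) \<Rightarrow>\<^sub>0 'k"

lemma det_eq_0_if_left_null_vector:
  fixes A :: "'a::idom mat"
  assumes "A \<in> carrier_mat n n" "v \<in> carrier_vec n" "v \<noteq> 0\<^sub>v n"
    and "transpose_mat A *\<^sub>v v = 0\<^sub>v n"
  shows "det A = 0"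
  using assms det_0_iff_vec_prod_zero[of "transpose_mat A" n] det_transpose[of A n] by auto

lemma rtrancl_exits_set:
  assumes "(x, y) \<in> R\<^sup>*" "x \<in> T" "y \<notin> T"
  shows "\<exists>a b. (a, b) \<in> R \<and> a \<in> T \<and> b \<notin> T"
  using assms by (induction rule: rtrancl_induct) auto

definition equicardinal :: "'a set list \<Rightarrow> bool" where
  "equicardinal Cs \<longleftrightarrow> (\<forall>C\<in>set Cs. finite C) \<and> (\<forall>C\<in>set Cs. \<forall>D\<in>set Cs. card C = card D)"

lemma minimal_vertex_covers_equicardinal:
  assumes "unmixed s E" "set Cs = {C. minimal_vertex_cover s E C}"
  shows "equicardinal Cs"
  unfolding equicardinal_def
proof (intro conjI ballI)
  fix C assume "C \<in> set Cs"
  then have "C \<subseteq> {..<s}"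
    using assms(2) by (auto simp: minimal_vertex_cover_def vertex_cover_def)
  then show "finite C" by (rule finite_subset) simp
next
  fix C D assume "C \<in> set Cs" "D \<in> set Cs"
  then show "card C = card D" using assms unfolding unmixed_def by blast
qed

lemma cov_adj_sym:
  assumes "equicardinal Cs" "cov_adj Cs i j"
  shows "cov_adj Cs j i"
  using assms unfolding equicardinal_def cov_adj_def by (metis Un_commute nth_mem)

lemma cov_adj_diff_singleton:
  assumes "equicardinal Cs" "cov_adj Cs i j"
  shows "\<exists>l. Cs!j - Cs!i = {l}"
proof -
  have "finite (Cs!i)" "finite (Cs!j)"
    using assms unfolding equicardinal_def cov_adj_def by auto
  then have "card (Cs!i \<union> Cs!j) = card (Cs!i) + card (Cs!j - Cs!i)"
    by (metis card_Un_disjoint finite_Diff Diff_disjoint Un_Diff_cancel)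
  then have "card (Cs!j - Cs!i) = 1" using assms(2) unfolding cov_adj_def by simp
  then show ?thesis by (simp add: card_1_singleton_iff)
qed

lemma cov_adj_LS_cols:
  assumes "equicardinal Cs" "cov_adj Cs i j"
  shows "(min i j, max i j) \<in> LS_cols Cs"
  using assms cov_adj_sym[OF assms] unfolding LS_cols_def cov_adj_def
  by (auto simp: min_def max_def)

definition cover_monomial :: "nat set \<Rightarrow> 'k::field mpoly" where
  "cover_monomial C = Poly_Mapping.single (\<Sum>x\<in>C. Poly_Mapping.single x 1) 1"

lemma var_nonzero: "(var l :: 'k::field mpoly) \<noteq> 0"
  unfolding var_def by (metis lookup_single_eq lookup_zero one_neq_zero)

lemma cover_monomial_nonzero: "(cover_monomial C :: 'k::field mpoly) \<noteq> 0"
  unfolding cover_monomial_def by (metis lookup_single_eq lookup_zero one_neq_zero)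

lemma cover_monomial_insert:
  assumes "finite C" "l \<notin> C"
  shows "(cover_monomial C :: 'k::field mpoly) * var l = cover_monomial (insert l C)"
  using assms unfolding cover_monomial_def var_def by (simp add: mult_single add.commute)

lemma cover_monomial_linear_syzygy:
  assumes "equicardinal Cs" "cov_adj Cs i j"
  shows "(cover_monomial (Cs!i) :: 'k::field mpoly) * var (THE x. x \<in> Cs!j - Cs!i)
       = cover_monomial (Cs!j) * var (THE x. x \<in> Cs!i - Cs!j)"
proof -
  obtain l where l: "Cs!j - Cs!i = {l}" using cov_adj_diff_singleton[OF assms] by blast
  obtain k where k: "Cs!i - Cs!j = {k}"
    using cov_adj_diff_singleton[OF assms(1) cov_adj_sym[OF assms]] by blast
  have "finite (Cs!i)" "finite (Cs!j)"
    using assms unfolding equicardinal_def cov_adj_def by auto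
  moreover have "insert l (Cs!i) = insert k (Cs!j)" "l \<notin> Cs!i" "k \<notin> Cs!j"
    using l k by blast+
  ultimately show ?thesis using l k by (simp add: cover_monomial_insert)
qed

lemma LS_entry_eq_0: "x \<noteq> fst p \<Longrightarrow> x \<noteq> snd p \<Longrightarrow> LS_entry Cs x p = 0"
  by (cases p) (simp add: LS_entry_def Let_def)

lemma LS_entry_nonzero:
  "x = fst p \<or> x = snd p \<Longrightarrow> (LS_entry Cs x p :: 'k::field mpoly) \<noteq> 0"
  by (cases p) (auto simp add: LS_entry_def Let_def var_nonzero)

lemma LS_column_orthogonal_to_closed_set:
  assumes eq: "equicardinal Cs" and p: "p \<in> LS_cols Cs" and "finite A" "K \<subseteq> A"
    and closed: "\<And>a b. cov_adj Cs a b \<Longrightarrow> a \<in> K \<Longrightarrow> b \<in> K"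
  shows "(\<Sum>x\<in>A. (if x \<in> K then cover_monomial (Cs!x) else 0) * LS_entry Cs x p)
    = (0 :: 'k::field mpoly)"
proof -
  obtain i j where ij: "p = (i, j)" "i < j" "cov_adj Cs i j"
    using p unfolding LS_cols_def by auto
  define f :: "nat \<Rightarrow> 'k mpoly"
    where "f x = (if x \<in> K then cover_monomial (Cs!x) else 0) * LS_entry Cs x p" for x
  have "sum f A = sum f ({i, j} \<inter> K)"
    by (rule sum.mono_neutral_right) (use assms in \<open>auto simp: f_def ij LS_entry_def\<close>)
  also have "\<dots> = 0"
  proof (cases "i \<in> K")
    case True
    then have "j \<in> K" using closed ij by blast
    then show ?thesis
      using True ij cover_monomial_linear_syzygy[OF eq ij(3), where 'k='k]
      by (simp add: f_def LS_entry_def Let_def)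
  next
    case False
    then have "{i, j} \<inter> K = {}" using closed cov_adj_sym[OF eq ij(3)] by blast
    then show ?thesis by simp
  qed
  finally show ?thesis unfolding f_def .
qed

definition LS_submatrix :: "nat set list \<Rightarrow> nat list \<Rightarrow> (nat \<times> nat) list \<Rightarrow> 'k::field mpoly mat" where
  "LS_submatrix Cs is js = mat (length is) (length js) (\<lambda>(a, b). LS_entry Cs (is!a) (js!b))"

lemma LS_minor_eq_0_if_rows_contain_closed_set:
  assumes eq: "equicardinal Cs" and "distinct is" "length js = length is" "set js \<subseteq> LS_cols Cs"
    and "K \<noteq> {}" "K \<subseteq> set is" and closed: "\<And>a b. cov_adj Cs a b \<Longrightarrow> a \<in> K \<Longrightarrow> b \<in> K"
  shows "det (LS_submatrix Cs is js :: 'k::field mpoly mat) = 0"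
proof (rule det_eq_0_if_left_null_vector)
  let ?n = "length is"
  let ?w = "\<lambda>x. if x \<in> K then cover_monomial (Cs!x) else (0 :: 'k mpoly)"
  define v where "v = vec ?n (\<lambda>a. ?w (is!a))"
  show "LS_submatrix Cs is js \<in> carrier_mat ?n ?n" "v \<in> carrier_vec ?n"
    using assms(3) by (simp_all add: LS_submatrix_def v_def)
  obtain a where "a < ?n" "is!a \<in> K"
    using assms(5,6) by (metis in_set_conv_nth subsetD ex_in_conv)
  then have "v $ a \<noteq> 0" by (simp add: v_def cover_monomial_nonzero)
  then show "v \<noteq> 0\<^sub>v ?n" using \<open>a < ?n\<close> by auto
  show "transpose_mat (LS_submatrix Cs is js) *\<^sub>v v = 0\<^sub>v ?n"
  proof (rule eq_vecI)
    fix b assume "b < dim_vec (0\<^sub>v ?n :: 'k mpoly vec)"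
    then have b: "b < ?n" by simp
    have "(transpose_mat (LS_submatrix Cs is js) *\<^sub>v v) $ b
        = (\<Sum>a<?n. ?w (is!a) * LS_entry Cs (is!a) (js!b))"
      using b assms(3)
      by (simp add: LS_submatrix_def v_def scalar_prod_def lessThan_atLeast0 mult.commute)
    also have "\<dots> = (\<Sum>x\<in>set is. ?w x * LS_entry Cs x (js!b))"
      using sum.reindex_bij_betw[OF bij_betw_nth[OF assms(2) refl refl]] by simp
    also have "\<dots> = 0"
      using b assms(3,4,6) closed
      by (intro LS_column_orthogonal_to_closed_set[OF eq]) (auto dest: nth_mem)
    finally show "(transpose_mat (LS_submatrix Cs is js) *\<^sub>v v) $ b = 0\<^sub>v ?n $ b"
      using b by simp
  qed (use assms(3) in \<open>simp add: LS_submatrix_def\<close>)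
qed

definition nonzero_LS_minor :: "'k::field itself \<Rightarrow> nat set list \<Rightarrow> nat \<Rightarrow> bool" where
  "nonzero_LS_minor (_ :: 'k itself) Cs k \<longleftrightarrow> (\<exists>is js. distinct is \<and> distinct js \<and>
     length is = k \<and> length js = k \<and> set is \<subseteq> {..<length Cs} \<and> set js \<subseteq> LS_cols Cs \<and>
     det (LS_submatrix Cs is js :: 'k mpoly mat) \<noteq> 0)"

lemma LS_rank_eq_Max: "LS_rank TYPE('k::field) Cs = Max {k. nonzero_LS_minor TYPE('k) Cs k}"
  unfolding LS_rank_def nonzero_LS_minor_def LS_submatrix_def
  by (rule arg_cong[where f = Max]) fastforce

lemma nonzero_LS_minor_le_length:
  assumes "nonzero_LS_minor TYPE('k::field) Cs k"
  shows "k \<le> length Cs"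
proof -
  obtain "is" where "distinct is" "length is = k" "set is \<subseteq> {..<length Cs}"
    using assms unfolding nonzero_LS_minor_def by blast
  then show ?thesis by (metis card_lessThan card_mono distinct_card finite_lessThan)
qed

lemma LS_rank_eqI:
  assumes "nonzero_LS_minor TYPE('k::field) Cs m" "\<And>k. nonzero_LS_minor TYPE('k) Cs k \<Longrightarrow> k \<le> m"
  shows "LS_rank TYPE('k) Cs = m"
  unfolding LS_rank_eq_Max
  using assms by (intro Max_eqI) (auto intro: finite_subset[of _ "{..m}"])

lemma nonzero_LS_minor_LS_rank: "nonzero_LS_minor TYPE('k::field) Cs (LS_rank TYPE('k) Cs)"
proof -
  have "nonzero_LS_minor TYPE('k) Cs 0"
    unfolding nonzero_LS_minor_def by (intro exI[of _ "[]"]) (simp add: LS_submatrix_def)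
  moreover have "finite {k. nonzero_LS_minor TYPE('k) Cs k}"
    by (rule finite_subset[of _ "{..length Cs}"]) (auto dest: nonzero_LS_minor_le_length)
  ultimately have "Max {k. nonzero_LS_minor TYPE('k) Cs k} \<in> {k. nonzero_LS_minor TYPE('k) Cs k}"
    by (intro Max_in) auto
  then show ?thesis unfolding LS_rank_eq_Max by simp
qed

lemma nonzero_LS_minor_le:
  assumes eq: "equicardinal Cs" and "nonzero_LS_minor TYPE('k::field) Cs k"
  shows "k \<le> length Cs - 1"
proof (rule ccontr)
  assume "\<not> k \<le> length Cs - 1"
  with nonzero_LS_minor_le_length[OF assms(2)] have k: "k = length Cs" "0 < length Cs" by auto
  obtain "is" js where m: "distinct is" "length is = k" "length js = k" "set is \<subseteq> {..<length Cs}"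
    "set js \<subseteq> LS_cols Cs" "det (LS_submatrix Cs is js :: 'k mpoly mat) \<noteq> 0"
    using assms(2) unfolding nonzero_LS_minor_def by blast
  have "set is = {..<length Cs}"
    using m k card_subset_eq[OF finite_lessThan m(4)] by (simp add: distinct_card)
  then have "det (LS_submatrix Cs is js :: 'k mpoly mat) = 0"
    using k m by (intro LS_minor_eq_0_if_rows_contain_closed_set[OF eq, of _ _ "{..<length Cs}"])
      (auto simp: cov_adj_def)
  with m show False by simp
qed

lemma cov_graph_disconnected_closed_set:
  assumes eq: "equicardinal Cs" and "\<not> cov_graph_connected Cs"
  obtains K where "K \<noteq> {}" "{..<length Cs} - K \<noteq> {}" "K \<subseteq> {..<length Cs}"
    "\<And>a b. cov_adj Cs a b \<Longrightarrow> a \<in> K \<longleftrightarrow> b \<in> K"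
proof -
  let ?R = "{(a, b). cov_adj Cs a b}"
  obtain i j where ij: "i < length Cs" "j < length Cs" "(i, j) \<notin> ?R\<^sup>*"
    using assms(2) unfolding cov_graph_connected_def by blast
  define K where "K = {x. x < length Cs \<and> (i, x) \<in> ?R\<^sup>*}"
  have forward: "b \<in> K" if "cov_adj Cs a b" "a \<in> K" for a b
  proof -
    have "(i, b) \<in> ?R\<^sup>*" using that rtrancl_into_rtrancl[of i a ?R b] by (simp add: K_def)
    moreover have "b < length Cs" using that(1) by (simp add: cov_adj_def)
    ultimately show ?thesis by (simp add: K_def)
  qed
  have "a \<in> K \<longleftrightarrow> b \<in> K" if "cov_adj Cs a b" for a b
    using forward that cov_adj_sym[OF eq that] by blast
  moreover have "i \<in> K" "j \<in> {..<length Cs} - K" using ij by (simp_all add: K_def)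
  moreover have "K \<subseteq> {..<length Cs}" by (auto simp: K_def)
  ultimately show thesis using that by blast
qed

lemma nonzero_LS_minor_less_if_disconnected:
  assumes eq: "equicardinal Cs" and "\<not> cov_graph_connected Cs"
    and "nonzero_LS_minor TYPE('k::field) Cs k"
  shows "k < length Cs - 1"
proof (rule ccontr)
  assume "\<not> k < length Cs - 1"
  obtain "is" js where m: "distinct is" "length is = k" "length js = k" "set is \<subseteq> {..<length Cs}"
    "set js \<subseteq> LS_cols Cs" "det (LS_submatrix Cs is js :: 'k mpoly mat) \<noteq> 0"
    using assms(3) unfolding nonzero_LS_minor_def by blast
  have vanish: "det (LS_submatrix Cs is js :: 'k mpoly mat) = 0"
    if "K \<noteq> {}" "K \<subseteq> set is" "\<And>a b. cov_adj Cs a b \<Longrightarrow> a \<in> K \<Longrightarrow> b \<in> K" for K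
    using LS_minor_eq_0_if_rows_contain_closed_set[OF eq m(1) _ m(5) that] m(2,3) by simp
  obtain K where K: "K \<noteq> {}" "{..<length Cs} - K \<noteq> {}" "K \<subseteq> {..<length Cs}"
    "\<And>a b. cov_adj Cs a b \<Longrightarrow> a \<in> K \<longleftrightarrow> b \<in> K"
    using cov_graph_disconnected_closed_set[OF assms(1,2)] by blast
  let ?L = "{..<length Cs} - K"
  have "K \<subseteq> set is \<or> ?L \<subseteq> set is"
  proof (rule ccontr)
    assume "\<not> (K \<subseteq> set is \<or> ?L \<subseteq> set is)"
    then obtain x y where xy: "x \<in> K" "x \<notin> set is" "y \<in> ?L" "y \<notin> set is" by blast
    then have "x \<noteq> y" by blast
    with xy have "card (insert x (insert y (set is))) = k + 2"
      using m(1,2) by (simp add: distinct_card)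
    moreover have "insert x (insert y (set is)) \<subseteq> {..<length Cs}"
      using xy K(3) m(4) by auto
    ultimately have "k + 2 \<le> length Cs" by (metis card_lessThan card_mono finite_lessThan)
    with \<open>\<not> k < length Cs - 1\<close> show False by linarith
  qed
  moreover have "b \<in> ?L" if "cov_adj Cs a b" "a \<in> ?L" for a b
    using that K(4) by (auto simp: cov_adj_def)
  ultimately show False using vanish[of K] vanish[of ?L] K m(6) by blast
qed

text \<open>The rows are the covers other than cover 0, in the order in which a spanning tree grown
  from cover 0 reaches them, and column b is the tree edge attaching row b; the minor is then
  upper triangular with nonzero diagonal.\<close>
definition spanning_order :: "nat set list \<Rightarrow> nat list \<Rightarrow> (nat \<times> nat) list \<Rightarrow> bool" where
  "spanning_order Cs is js \<longleftrightarrow> distinct (0 # is) \<and> set is \<subseteq> {..<length Cs} \<and>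
     length js = length is \<and>
     (\<forall>b<length is. js!b \<in> LS_cols Cs \<and>
        (\<exists>w \<in> insert 0 (set (take b is)). js!b = (min (is!b) w, max (is!b) w)))"

lemma spanning_order_snoc:
  assumes so: "spanning_order Cs is js" and "y \<notin> insert 0 (set is)" "y < length Cs"
    and "w \<in> insert 0 (set is)" "(min y w, max y w) \<in> LS_cols Cs"
  shows "spanning_order Cs (is @ [y]) (js @ [(min y w, max y w)])"
proof -
  let ?e = "(min y w, max y w)"
  have "(js @ [?e]) ! b \<in> LS_cols Cs \<and> (\<exists>w' \<in> insert 0 (set (take b (is @ [y]))).
      (js @ [?e]) ! b = (min ((is @ [y]) ! b) w', max ((is @ [y]) ! b) w'))"
    if "b < Suc (length is)" for b
  proof (cases "b < length is")
    case True
    then show ?thesis using so by (simp add: spanning_order_def nth_append)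
  next
    case False
    then have "(js @ [?e]) ! b = ?e" "(is @ [y]) ! b = y" "take b (is @ [y]) = is"
      using that so by (simp_all add: spanning_order_def nth_append)
    then show ?thesis using assms(4,5) by auto
  qed
  then show ?thesis using assms(1-3) by (simp add: spanning_order_def)
qed

lemma spanning_order_exists:
  assumes eq: "equicardinal Cs" and con: "cov_graph_connected Cs" and "n \<le> length Cs - 1"
  shows "\<exists>is js. spanning_order Cs is js \<and> length is = n"
  using \<open>n \<le> length Cs - 1\<close>
proof (induction n)
  case 0
  show ?case by (intro exI[of _ "[]"]) (simp add: spanning_order_def)
next
  case (Suc n)
  then have "n \<le> length Cs - 1" by simp
  then obtain "is" js where so: "spanning_order Cs is js" "length is = n" using Suc.IH by blast
  let ?T = "insert 0 (set is)"
  have "card ?T = Suc n" using so by (simp add: spanning_order_def distinct_card)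
  moreover have "?T \<subseteq> {..<length Cs}" using so Suc.prems by (auto simp: spanning_order_def)
  moreover have "?T \<noteq> {..<length Cs}"
  proof
    assume "?T = {..<length Cs}"
    then have "card ?T = length Cs" by simp
    with \<open>card ?T = Suc n\<close> Suc.prems show False by simp
  qed
  ultimately obtain v where v: "v < length Cs" "v \<notin> ?T" by blast
  have "0 < length Cs" using v(1) by linarith
  then have "(0, v) \<in> {(a, b). cov_adj Cs a b}\<^sup>*"
    using con v(1) unfolding cov_graph_connected_def by simp
  then obtain w y where "(w, y) \<in> {(a, b). cov_adj Cs a b}" "w \<in> ?T" "y \<notin> ?T"
    using rtrancl_exits_set[OF _ insertI1 v(2)] by blast
  moreover have "y < length Cs" "(min y w, max y w) \<in> LS_cols Cs"
    using calculation(1) cov_adj_LS_cols[OF eq cov_adj_sym[OF eq]] by (auto simp: cov_adj_def)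
  ultimately have "spanning_order Cs (is @ [y]) (js @ [(min y w, max y w)])"
    using spanning_order_snoc[OF so(1)] by blast
  then show ?case using so(2) by (metis length_append_singleton)
qed

lemma spanning_order_LS_entry_below:
  assumes so: "spanning_order Cs is js" and "b < a" "a < length is"
  shows "LS_entry Cs (is!a) (js!b) = 0"
proof -
  have "b < length is" using assms by simp
  then obtain w where w: "w \<in> insert 0 (set (take b is))" "js!b = (min (is!b) w, max (is!b) w)"
    using so unfolding spanning_order_def by blast
  have d: "distinct is" "0 \<notin> set is" using so by (simp_all add: spanning_order_def)
  from w(1) have "w = 0 \<or> (\<exists>m<b. w = is!m)" by (auto simp: in_set_conv_nth)
  moreover have "is!a \<noteq> 0" using d(2) nth_mem[OF assms(3)] by metis
  ultimately have "is!a \<noteq> w" using d(1) assms(2,3) by (auto simp: nth_eq_iff_index_eq)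
  moreover have "is!a \<noteq> is!b" using d assms(2,3) by (simp add: nth_eq_iff_index_eq)
  ultimately show ?thesis using w(2) by (intro LS_entry_eq_0) (auto simp: min_def max_def)
qed

lemma spanning_order_LS_entry_diag:
  assumes "spanning_order Cs is js" "b < length is"
  shows "(LS_entry Cs (is!b) (js!b) :: 'k::field mpoly) \<noteq> 0"
proof -
  obtain w where "js!b = (min (is!b) w, max (is!b) w)"
    using assms unfolding spanning_order_def by blast
  then show ?thesis by (intro LS_entry_nonzero) (auto simp: min_def max_def)
qed

lemma spanning_order_nonzero_LS_minor:
  assumes so: "spanning_order Cs is js"
  shows "nonzero_LS_minor TYPE('k::field) Cs (length is)"
proof -
  have len: "length js = length is" and rows: "distinct is" "set is \<subseteq> {..<length Cs}"
    using so by (auto simp: spanning_order_def)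
  have cols: "set js \<subseteq> LS_cols Cs"
    using so len unfolding spanning_order_def by (metis in_set_conv_nth subsetI)
  have "js!a \<noteq> js!b" if "b < a" "a < length is" for a b
    using spanning_order_LS_entry_below[OF so that] spanning_order_LS_entry_diag[OF so that(2)]
    by (metis (no_types))
  then have "distinct js" using len by (metis distinct_conv_nth linorder_neqE_nat)
  let ?M = "LS_submatrix Cs is js :: 'k mpoly mat"
  have M: "?M \<in> carrier_mat (length is) (length is)" using len by (simp add: LS_submatrix_def)
  have "upper_triangular ?M"
    using spanning_order_LS_entry_below[OF so] len by (auto simp: upper_triangular_def LS_submatrix_def)
  moreover have "0 \<notin> set (diag_mat ?M)"
    using spanning_order_LS_entry_diag[OF so, where 'k='k] len
    by (auto simp: diag_mat_def LS_submatrix_def)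
  ultimately have "det ?M \<noteq> 0" using upper_triangular_imp_det_eq_0_iff[OF M] by simp
  then show ?thesis unfolding nonzero_LS_minor_def using len rows cols \<open>distinct js\<close> by blast
qed

theorem proposition4p1:
  fixes s :: nat and E :: "nat set set" and Cs :: "nat set list"
  assumes "simple_graph s E"
    and "unmixed s E"
    and "distinct Cs"
    and "set Cs = {C. minimal_vertex_cover s E C}"
  shows "cov_graph_connected Cs \<longleftrightarrow> LS_rank TYPE('k::field) Cs = length Cs - 1"
proof -
  have eq: "equicardinal Cs" using minimal_vertex_covers_equicardinal[OF assms(2,4)] .
  show ?thesis
  proof
    assume "cov_graph_connected Cs"
    then obtain "is" js where "spanning_order Cs is js" "length is = length Cs - 1"
      using spanning_order_exists[OF eq] by blast
    then have "nonzero_LS_minor TYPE('k) Cs (length Cs - 1)"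
      using spanning_order_nonzero_LS_minor by metis
    then show "LS_rank TYPE('k) Cs = length Cs - 1"
      using LS_rank_eqI nonzero_LS_minor_le[OF eq] by blast
  next
    assume "LS_rank TYPE('k) Cs = length Cs - 1"
    then have "nonzero_LS_minor TYPE('k) Cs (length Cs - 1)"
      using nonzero_LS_minor_LS_rank by metis
    then show "cov_graph_connected Cs"
      using nonzero_LS_minor_less_if_disconnected[OF eq] by blast
  qed
qed

end
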